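(* In the online tolling setting described in the context, let $\bm{\pi}$ be the algorithm that sets $\boldsymbol{\tau}^{(1)}=\bm{0}$ and, after observing the equilibrium edge flows $\bm{x}^t$ under $\boldsymbol{\tau}^{(t)}$, updates $\boldsymbol{\tau}^{(t+1)}=(\boldsymbol{\tau}^{(t)}-\gamma(\bm{c}-\bm{x}^t))_+$ (componentwise positive part) with step size $\gamma>0$. Then $$V_T(\bm{\pi})\le\frac{1}{\gamma}\,\mathbb{E}\big[\|\boldsymbol{\tau}^{(T+1)}\|_2\big].$$
   Context: Network: directed graph $G=(V,E)$, edge capacities $\bm{c}=\{c_e\}$, fixed edge travel times $l_e$. Finite user set $\mathcal{U}$; user $u$ has fixed outside-option cost $\lambda_u$. In each period $t=1,\dots,T$, O-D pairs $w^t_u$ and values of time $v^t_u\ge0$ are drawn i.i.d. across periods from a distribution $\mathcal{D}$; $\mathcal{P}^t_u$ is the finite set of paths for $w^t_u$. Given tolls $\boldsymbol{\tau}^{(t)}$, the period-$t$ equilibrium assigns each user to a path $P$ or the outside option so as to minimize cost ($v^t_u\sum_{e\in P}l_e+\sum_{e\in P}\tau^{(t)}_e$ for a path, $\lambda_u$ for the outside option; capacities need not be respected), with edge flows $x^t_e$ equal to the number of users whose chosen path contains $e$. Constraint violation: $V_T(\bm{\pi})=\mathbb{E}\big[\|(\sum_{t=1}^T(\bm{x}^t-\bm{c}))_+\|_2\big]$, expectation over $\mathcal{D}$. *)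

theory Defs
  imports "HOL-Analysis.Analysis" "HOL-Probability.Probability"
begin

fun edge_walk :: "'v \<Rightarrow> ('v \<times> 'v) list \<Rightarrow> 'v \<Rightarrow> bool" where
  "edge_walk a [] b = (a = b)"
| "edge_walk a (e # es) b = (fst e = a \<and> edge_walk (snd e) es b)"

definition is_path :: "('v \<times> 'v) set \<Rightarrow> 'v \<Rightarrow> 'v \<Rightarrow> ('v \<times> 'v) list \<Rightarrow> bool" where
  "is_path E o' d P \<longleftrightarrow> set P \<subseteq> E \<and> edge_walk o' P d \<and> distinct (o' # map snd P)"

definition paths :: "('v \<times> 'v) set \<Rightarrow> 'v \<times> 'v \<Rightarrow> ('v \<times> 'v) list set" where
  "paths E w = {P. is_path E (fst w) (snd w) P}"

definition path_cost :: "('e \<Rightarrow> real) \<Rightarrow> ('e \<Rightarrow> real) \<Rightarrow> real \<Rightarrow> 'e list \<Rightarrow> real" where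
  "path_cost l tau v P = v * sum_list (map l P) + sum_list (map tau P)"

text \<open>An option is either a path (Some P) or the outside option (None).\<close>
definition option_cost :: "('e \<Rightarrow> real) \<Rightarrow> ('e \<Rightarrow> real) \<Rightarrow> real \<Rightarrow> real \<Rightarrow> 'e list option \<Rightarrow> real" where
  "option_cost l tau lam v opt = (case opt of None \<Rightarrow> lam | Some P \<Rightarrow> path_cost l tau v P)"

definition feasible_option :: "('v \<times> 'v) set \<Rightarrow> 'v \<times> 'v \<Rightarrow> ('v \<times> 'v) list option \<Rightarrow> bool" where
  "feasible_option E w opt = (case opt of None \<Rightarrow> True | Some P \<Rightarrow> P \<in> paths E w)"

text \<open>A draw assigns every user an O-D pair and a value of time. An assignment is an
equilibrium if every user picks a cost-minimising feasible option (capacities ignored).\<close>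
definition is_equilibrium ::
  "('v \<times> 'v) set \<Rightarrow> ('v \<times> 'v \<Rightarrow> real) \<Rightarrow> ('u \<Rightarrow> real) \<Rightarrow> ('v \<times> 'v \<Rightarrow> real)
    \<Rightarrow> ('u \<Rightarrow> ('v \<times> 'v) \<times> real) \<Rightarrow> ('u \<Rightarrow> ('v \<times> 'v) list option) \<Rightarrow> bool" where
  "is_equilibrium E l lam tau \<omega> a \<longleftrightarrow>
     (\<forall>u. feasible_option E (fst (\<omega> u)) (a u) \<and>
          (\<forall>opt. feasible_option E (fst (\<omega> u)) opt \<longrightarrow>
              option_cost l tau (lam u) (snd (\<omega> u)) (a u) \<le> option_cost l tau (lam u) (snd (\<omega> u)) opt))"

definition edge_flow :: "('u::finite \<Rightarrow> 'e list option) \<Rightarrow> 'e \<Rightarrow> real" where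
  "edge_flow a e = real (card {u. \<exists>P. a u = Some P \<and> e \<in> set P})"

text \<open>Toll sequence of the algorithm: tolls sel gamma c omega n is tau^(n+1); the
equilibrium in period t = n+1 is sel (tau^(t)) (omega t).\<close>
primrec tolls ::
  "(('e \<Rightarrow> real) \<Rightarrow> 'd \<Rightarrow> ('u::finite \<Rightarrow> 'e list option)) \<Rightarrow> real \<Rightarrow> ('e \<Rightarrow> real)
     \<Rightarrow> (nat \<Rightarrow> 'd) \<Rightarrow> nat \<Rightarrow> 'e \<Rightarrow> real" where
  "tolls sel \<gamma> c \<omega> 0 = (\<lambda>e. 0)"
| "tolls sel \<gamma> c \<omega> (Suc n) =
     (\<lambda>e. max 0 (tolls sel \<gamma> c \<omega> n e - \<gamma> * (c e - edge_flow (sel (tolls sel \<gamma> c \<omega> n) (\<omega> (Suc n))) e)))"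

definition period_flow ::
  "(('e \<Rightarrow> real) \<Rightarrow> 'd \<Rightarrow> ('u::finite \<Rightarrow> 'e list option)) \<Rightarrow> real \<Rightarrow> ('e \<Rightarrow> real)
     \<Rightarrow> (nat \<Rightarrow> 'd) \<Rightarrow> nat \<Rightarrow> 'e \<Rightarrow> real" where
  "period_flow sel \<gamma> c \<omega> t = edge_flow (sel (tolls sel \<gamma> c \<omega> (t - 1)) (\<omega> t))"

end

theory Submission
  imports Defs
begin

text \<open>The projected update gives \<open>\<tau>(t+1) \<ge> \<tau>(t) + \<gamma> (x(t) - c)\<close> componentwise, which
  telescopes to \<open>\<gamma> \<Sum>\<^sub>t (x(t) - c) \<le> \<tau>(T+1)\<close>; as tolls are nonnegative, also
  \<open>\<gamma> (\<Sum>\<^sub>t (x(t) - c))\<^sub>+ \<le> \<tau>(T+1)\<close>. This holds on every sample path, so taking norms and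
  expectations gives the bound.\<close>

text \<open>Unlike \<open>nn_integral_cmult\<close>, no measurability of \<open>f\<close> is needed: the selected equilibria
  need not depend measurably on the draws.\<close>

lemma nn_integral_cmult_le:
  fixes c :: real
  assumes "0 < c"
  shows "(\<integral>\<^sup>+ x. ennreal c * f x \<partial>M) \<le> ennreal c * integral\<^sup>N M f"
  unfolding nn_integral_def SUP_mult_left_ennreal
proof (rule SUP_mono)
  fix g assume "g \<in> {g. simple_function M g \<and> g \<le> (\<lambda>x. ennreal c * f x)}"
  then have g: "simple_function M g" "\<And>x. g x \<le> ennreal c * f x"
    by (auto simp: le_fun_def)
  define h where "h = (\<lambda>x. ennreal (1 / c) * g x)"
  have cancel: "ennreal (1 / c) * (ennreal c * y) = y" for y
    using assms by (simp flip: mult.assoc ennreal_mult)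
  have "h x \<le> f x" for x
    using mult_left_mono[OF g(2), of "ennreal (1 / c)" x] by (simp add: h_def cancel)
  moreover have "simple_function M h"
    using g(1) by (simp add: h_def)
  moreover have "integral\<^sup>S M g = ennreal c * integral\<^sup>S M h"
    using g(1) cancel by (simp add: h_def mult.left_commute)
  ultimately show "\<exists>h\<in>{g. simple_function M g \<and> g \<le> f}. integral\<^sup>S M g \<le> ennreal c * integral\<^sup>S M h"
    by (auto simp: le_fun_def)
qed

lemma tolls_nonneg: "0 \<le> tolls sel \<gamma> c \<omega> n e"
  by (cases n) auto

lemma scaled_excess_flow_le_tolls:
  "\<gamma> * (\<Sum>t\<in>{1..n}. period_flow sel \<gamma> c \<omega> t e - c e) \<le> tolls sel \<gamma> c \<omega> n e"
proof (induction n)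
  case 0
  then show ?case by simp
next
  case (Suc n)
  have "\<gamma> * (\<Sum>t\<in>{1..Suc n}. period_flow sel \<gamma> c \<omega> t e - c e)
      = \<gamma> * (\<Sum>t\<in>{1..n}. period_flow sel \<gamma> c \<omega> t e - c e) + \<gamma> * (period_flow sel \<gamma> c \<omega> (Suc n) e - c e)"
    by (simp add: distrib_left)
  also have "\<dots> \<le> tolls sel \<gamma> c \<omega> n e - \<gamma> * (c e - period_flow sel \<gamma> c \<omega> (Suc n) e)"
    using Suc.IH by (simp add: algebra_simps)
  also have "\<dots> \<le> tolls sel \<gamma> c \<omega> (Suc n) e"
    by (simp add: period_flow_def)
  finally show ?case .
qed

lemma L2_set_excess_flow_le_tolls:
  assumes "0 < \<gamma>"
  shows "L2_set (\<lambda>e. max 0 (\<Sum>t\<in>{1..n}. period_flow sel \<gamma> c \<omega> t e - c e)) E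
           \<le> (1 / \<gamma>) * L2_set (tolls sel \<gamma> c \<omega> n) E"
proof -
  have "max 0 (\<Sum>t\<in>{1..n}. period_flow sel \<gamma> c \<omega> t e - c e) \<le> (1 / \<gamma>) * tolls sel \<gamma> c \<omega> n e" for e
    using scaled_excess_flow_le_tolls[where n = n and e = e] tolls_nonneg[where n = n and e = e] assms
    by (auto simp: field_simps)
  then have "L2_set (\<lambda>e. max 0 (\<Sum>t\<in>{1..n}. period_flow sel \<gamma> c \<omega> t e - c e)) E
      \<le> L2_set (\<lambda>e. (1 / \<gamma>) * tolls sel \<gamma> c \<omega> n e) E"
    by (intro L2_set_mono) auto
  also have "\<dots> = (1 / \<gamma>) * L2_set (tolls sel \<gamma> c \<omega> n) E"
    using L2_set_right_distrib[of "1 / \<gamma>" "tolls sel \<gamma> c \<omega> n" E] assms by simp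
  finally show ?thesis .
qed

theorem lemma3:
  fixes V :: "'v set" and E :: "('v \<times> 'v) set"
    and c l :: "'v \<times> 'v \<Rightarrow> real"
    and lam :: "'u::finite \<Rightarrow> real"
    and D :: "('u \<Rightarrow> ('v \<times> 'v) \<times> real) measure"
    and sel :: "('v \<times> 'v \<Rightarrow> real) \<Rightarrow> ('u \<Rightarrow> ('v \<times> 'v) \<times> real) \<Rightarrow> ('u \<Rightarrow> ('v \<times> 'v) list option)"
    and T :: nat and \<gamma> :: real
  assumes "finite V" and "E \<subseteq> V \<times> V"
    and "\<forall>e\<in>E. c e \<ge> 0" and "\<forall>e\<in>E. l e \<ge> 0"
    and "prob_space D"
    and "\<forall>\<omega>\<in>space D. \<forall>u. fst (\<omega> u) \<in> V \<times> V \<and> snd (\<omega> u) \<ge> 0"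
    and "\<gamma> > 0"
    and "\<forall>tau \<omega>. is_equilibrium E l lam tau \<omega> (sel tau \<omega>)"
  shows "(\<integral>\<^sup>+ \<omega>. ennreal (L2_set (\<lambda>e. max 0 (\<Sum>t\<in>{1..T}. period_flow sel \<gamma> c \<omega> t e - c e)) E)
            \<partial>(PiM {1..T} (\<lambda>_. D)))
         \<le> ennreal (1 / \<gamma>) *
           (\<integral>\<^sup>+ \<omega>. ennreal (L2_set (tolls sel \<gamma> c \<omega> T) E) \<partial>(PiM {1..T} (\<lambda>_. D)))"
proof -
  have "(\<integral>\<^sup>+ \<omega>. ennreal (L2_set (\<lambda>e. max 0 (\<Sum>t\<in>{1..T}. period_flow sel \<gamma> c \<omega> t e - c e)) E)
            \<partial>(PiM {1..T} (\<lambda>_. D)))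
      \<le> (\<integral>\<^sup>+ \<omega>. ennreal (1 / \<gamma>) * ennreal (L2_set (tolls sel \<gamma> c \<omega> T) E) \<partial>(PiM {1..T} (\<lambda>_. D)))"
    using L2_set_excess_flow_le_tolls[OF \<open>\<gamma> > 0\<close>] \<open>\<gamma> > 0\<close>
    by (intro nn_integral_mono) (simp flip: ennreal_mult add: ennreal_leI)
  also have "\<dots> \<le> ennreal (1 / \<gamma>) *
           (\<integral>\<^sup>+ \<omega>. ennreal (L2_set (tolls sel \<gamma> c \<omega> T) E) \<partial>(PiM {1..T} (\<lambda>_. D)))"
    using \<open>\<gamma> > 0\<close> by (intro nn_integral_cmult_le) simp
  finally show ?thesis .
qed

end
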